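(* Let $F$ be a safe sentence, let $I$ be an interpretation of the object and predicate constants occurring in $F$, and let $X$ be any superset of the universe of $I$. Then the extension of $I$ to $X$ is a stable model of $F$ if and only if $I$ is a stable model of $F$.
   Context: Formulas are first-order formulas over a signature with object constants, predicate constants and equality, but no function constants of arity $>0$. Primitive connectives are $\bot,\land,\lor,\rightarrow$, quantifiers $\forall,\exists$; $\neg G$ is $G\rightarrow\bot$, $\top$ is $\bot\rightarrow\bot$, $G\leftrightarrow H$ is $(G\rightarrow H)\land(H\rightarrow G)$. A sentence is a formula without free variables. Stable models: for a sentence $F$, let $\mathbf p=p_1,\dots,p_n$ be all predicate constants occurring in $F$ and $\mathbf u=u_1,\dots,u_n$ distinct predicate variables with matching arities. $\mathbf u\le\mathbf p$ is $\bigwedge_i\forall\mathbf x(u_i(\mathbf x)\rightarrow p_i(\mathbf x))$, $\mathbf u=\mathbf p$ is $\bigwedge_i\forall\mathbf x(u_i(\mathbf x)\leftrightarrow p_i(\mathbf x))$, $\mathbf u<\mathbf p$ is $(\mathbf u\le\mathbf p)\land\neg(\mathbf u=\mathbf p)$. $F^*(\mathbf u)$: $p_i(\mathbf t)^*=u_i(\mathbf t)$; $(t_1=t_2)^*=(t_1=t_2)$; $\bot^*=\bot$; $(G\land H)^*=G^*\land H^*$; $(G\lor H)^*=G^*\lor H^*$; $(G\rightarrow H)^*=(G^*\rightarrow H^* )\land(G\rightarrow H)$; $(\forall xG)^*=\forall xG^*$; $(\exists xG)^*=\exists xG^*$. $\mathrm{SM}[F]$ is $F\land\neg\exists\mathbf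 u((\mathbf u<\mathbf p)\land F^*(\mathbf u))$. An interpretation of the object and predicate constants occurring in $F$ is a stable model of $F$ if it satisfies $\mathrm{SM}[F]$. Extension: if $I$ is an interpretation of a set of object and predicate constants and $X$ is a superset of the universe of $I$, the extension of $I$ to $X$ is the interpretation of the same constants with universe $X$ in which each object constant denotes the same object as in $I$ and each predicate constant denotes the same set of tuples as in $I$. Restricted variables: for quantifier-free $G$, $\mathrm{RV}(G)$ is: $\emptyset$ if $G$ is an equality between two variables; the set of variables of $G$ if $G$ is any other atomic formula; $\mathrm{RV}(\bot)=\emptyset$; $\mathrm{RV}(G\land H)=\mathrm{RV}(G)\cup\mathrm{RV}(H)$; $\mathrm{RV}(G\lor H)=\mathrm{RV}(G)\cap\mathrm{RV}(H)$; $\mathrm{RV}(G\rightarrow H)=\emptyset$. An occurrence of a subformula or variable is positive if the number of implications containing it in their antecedent is even, negative otherwise, and strictly positive if it is in the antecedent of no implication. A prenex sentence $Q_1x_1\cdots Q_nx_nM$ ($M$ quantifier-free, $x_i$ distinct) is semi-safe if every strictly positive occurrence of every $x_i$ in $M$ belongs to a subformula $G\rightarrow H$ with $x_i\in\mathrm{RV}(G)$. Simplification transformations: $\neg\bot\mapsto\top$, $\neg\top\mapsto\bot$; $\bot\land G\mapsto\bot$, $G\land\bot\mapsto\bot$, $\top\land G\mapsto G$, $G\land\top\mapsto G$; $\bot\lor G\mapsto G$, $G\lor\bot\mapsto G$, $\top\lor G\mapsto\top$, $G\lor\top\mapsto\top$; $\bot\rightarrow G\mapsto\top$, $G\rightarrow\top\mapsto\top$,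 $\top\rightarrow G\mapsto G$. A variable $x$ is positively (resp. negatively) weakly restricted in a quantifier-free formula $G$ if the formula obtained from $G$ by first replacing every atomic formula $A$ of $G$ with $x\in\mathrm{RV}(A)$ by $\bot$ and then applying the simplification transformations is $\top$ (resp. $\bot$). A semi-safe prenex sentence $Q_1x_1\cdots Q_nx_nM$ is safe if for every occurrence of every variable $x_i$: (a) if $Q_i=\forall$, the occurrence belongs to a positive subformula (of the sentence) in which $x_i$ is positively weakly restricted, or to a negative subformula in which $x_i$ is negatively weakly restricted; (b) if $Q_i=\exists$, the occurrence belongs to a negative subformula in which $x_i$ is positively weakly restricted, or to a positive subformula in which $x_i$ is negatively weakly restricted. *)

theory Defs
  imports Main
begin

datatype 'c trm = Var nat | Cst 'c

datatype ('p, 'c) form =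
    FBot
  | FPred 'p "'c trm list"
  | FEq "'c trm" "'c trm"
  | FAnd "('p, 'c) form" "('p, 'c) form"
  | FOr "('p, 'c) form" "('p, 'c) form"
  | FImp "('p, 'c) form" "('p, 'c) form"
  | FAll nat "('p, 'c) form"
  | FEx nat "('p, 'c) form"

definition FNeg :: "('p, 'c) form \<Rightarrow> ('p, 'c) form" where
  "FNeg G = FImp G FBot"

definition FTop :: "('p, 'c) form" where
  "FTop = FImp FBot FBot"

fun tvars :: "'c trm \<Rightarrow> nat set" where
  "tvars (Var v) = {v}"
| "tvars (Cst k) = {}"

fun fv :: "('p, 'c) form \<Rightarrow> nat set" where
  "fv FBot = {}"
| "fv (FPred p ts) = (\<Union>t\<in>set ts. tvars t)"
| "fv (FEq s t) = tvars s \<union> tvars t"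
| "fv (FAnd G H) = fv G \<union> fv H"
| "fv (FOr G H) = fv G \<union> fv H"
| "fv (FImp G H) = fv G \<union> fv H"
| "fv (FAll x G) = fv G - {x}"
| "fv (FEx x G) = fv G - {x}"

definition sentence :: "('p, 'c) form \<Rightarrow> bool" where
  "sentence F \<longleftrightarrow> fv F = {}"

fun preds :: "('p, 'c) form \<Rightarrow> 'p set" where
  "preds FBot = {}"
| "preds (FPred p ts) = {p}"
| "preds (FEq s t) = {}"
| "preds (FAnd G H) = preds G \<union> preds H"
| "preds (FOr G H) = preds G \<union> preds H"
| "preds (FImp G H) = preds G \<union> preds H"
| "preds (FAll x G) = preds G"
| "preds (FEx x G) = preds G"

fun toconsts :: "'c trm \<Rightarrow> 'c set" where
  "toconsts (Var v) = {}"
| "toconsts (Cst k) = {k}"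

fun oconsts :: "('p, 'c) form \<Rightarrow> 'c set" where
  "oconsts FBot = {}"
| "oconsts (FPred p ts) = (\<Union>t\<in>set ts. toconsts t)"
| "oconsts (FEq s t) = toconsts s \<union> toconsts t"
| "oconsts (FAnd G H) = oconsts G \<union> oconsts H"
| "oconsts (FOr G H) = oconsts G \<union> oconsts H"
| "oconsts (FImp G H) = oconsts G \<union> oconsts H"
| "oconsts (FAll x G) = oconsts G"
| "oconsts (FEx x G) = oconsts G"

fun wf_form :: "('p \<Rightarrow> nat) \<Rightarrow> ('p, 'c) form \<Rightarrow> bool" where
  "wf_form ar FBot = True"
| "wf_form ar (FPred p ts) = (length ts = ar p)"
| "wf_form ar (FEq s t) = True"
| "wf_form ar (FAnd G H) = (wf_form ar G \<and> wf_form ar H)"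
| "wf_form ar (FOr G H) = (wf_form ar G \<and> wf_form ar H)"
| "wf_form ar (FImp G H) = (wf_form ar G \<and> wf_form ar H)"
| "wf_form ar (FAll x G) = wf_form ar G"
| "wf_form ar (FEx x G) = wf_form ar G"

fun qfree :: "('p, 'c) form \<Rightarrow> bool" where
  "qfree (FAnd G H) = (qfree G \<and> qfree H)"
| "qfree (FOr G H) = (qfree G \<and> qfree H)"
| "qfree (FImp G H) = (qfree G \<and> qfree H)"
| "qfree (FAll x G) = False"
| "qfree (FEx x G) = False"
| "qfree _ = True"

text \<open>An interpretation: universe U (a set), denotations of object constants c,
  extensions of predicate constants P (sets of tuples, as lists).\<close>

fun evalt :: "('c \<Rightarrow> 'a) \<Rightarrow> (nat \<Rightarrow> 'a) \<Rightarrow> 'c trm \<Rightarrow> 'a" where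
  "evalt c env (Var v) = env v"
| "evalt c env (Cst k) = c k"

fun sat :: "'a set \<Rightarrow> ('c \<Rightarrow> 'a) \<Rightarrow> ('p \<Rightarrow> 'a list set) \<Rightarrow> (nat \<Rightarrow> 'a)
             \<Rightarrow> ('p, 'c) form \<Rightarrow> bool" where
  "sat U c P env FBot = False"
| "sat U c P env (FPred p ts) = (map (evalt c env) ts \<in> P p)"
| "sat U c P env (FEq s t) = (evalt c env s = evalt c env t)"
| "sat U c P env (FAnd G H) = (sat U c P env G \<and> sat U c P env H)"
| "sat U c P env (FOr G H) = (sat U c P env G \<or> sat U c P env H)"
| "sat U c P env (FImp G H) = (sat U c P env G \<longrightarrow> sat U c P env H)"
| "sat U c P env (FAll x G) = (\<forall>a\<in>U. sat U c P (env(x := a)) G)"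
| "sat U c P env (FEx x G) = (\<exists>a\<in>U. sat U c P (env(x := a)) G)"

definition models :: "'a set \<Rightarrow> ('c \<Rightarrow> 'a) \<Rightarrow> ('p \<Rightarrow> 'a list set) \<Rightarrow> ('p, 'c) form \<Rightarrow> bool" where
  "models U c P F \<longleftrightarrow> (\<forall>env. (\<forall>v. env v \<in> U) \<longrightarrow> sat U c P env F)"

definition tuples :: "('p \<Rightarrow> nat) \<Rightarrow> 'p \<Rightarrow> 'a set \<Rightarrow> 'a list set" where
  "tuples ar p U = {xs. length xs = ar p \<and> set xs \<subseteq> U}"

definition wf_interp :: "('p \<Rightarrow> nat) \<Rightarrow> ('p, 'c) form \<Rightarrow> 'a set \<Rightarrow> ('c \<Rightarrow> 'a)
                          \<Rightarrow> ('p \<Rightarrow> 'a list set) \<Rightarrow> bool" where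
  "wf_interp ar F U c P \<longleftrightarrow> U \<noteq> {} \<and> (\<forall>k\<in>oconsts F. c k \<in> U)
     \<and> (\<forall>p\<in>preds F. P p \<subseteq> tuples ar p U)"

text \<open>The transformation F*(u): predicate constant p is rendered as Inl p,
  the corresponding predicate variable u_p as Inr p.\<close>
fun star :: "('p, 'c) form \<Rightarrow> ('p + 'p, 'c) form" where
  "star FBot = FBot"
| "star (FPred p ts) = FPred (Inr p) ts"
| "star (FEq s t) = FEq s t"
| "star (FAnd G H) = FAnd (star G) (star H)"
| "star (FOr G H) = FOr (star G) (star H)"
| "star (FImp G H) = FAnd (FImp (star G) (star H)) (FImp (map_form Inl id G) (map_form Inl id H))"
| "star (FAll x G) = FAll x (star G)"
| "star (FEx x G) = FEx x (star G)"

text \<open>SM[F] holds in the interpretation (U, c, P); the second-order quantifier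
  over u ranges over relations on U of the appropriate arities.\<close>
definition stable_model :: "('p \<Rightarrow> nat) \<Rightarrow> ('p, 'c) form \<Rightarrow> 'a set \<Rightarrow> ('c \<Rightarrow> 'a)
                             \<Rightarrow> ('p \<Rightarrow> 'a list set) \<Rightarrow> bool" where
  "stable_model ar F U c P \<longleftrightarrow>
     models U c P F \<and>
     \<not> (\<exists>Q. (\<forall>p\<in>preds F. Q p \<subseteq> tuples ar p U)
          \<and> (\<forall>p\<in>preds F. Q p \<subseteq> P p)
          \<and> \<not> (\<forall>p\<in>preds F. Q p = P p)
          \<and> models U c (\<lambda>r. case r of Inl p \<Rightarrow> P p | Inr p \<Rightarrow> Q p) (star F))"

text \<open>Restricted variables (for quantifier-free formulas; quantified cases unused).\<close>
fun RV :: "('p, 'c) form \<Rightarrow> nat set" where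
  "RV FBot = {}"
| "RV (FPred p ts) = fv (FPred p ts)"
| "RV (FEq (Var x) (Var y)) = {}"
| "RV (FEq s t) = tvars s \<union> tvars t"
| "RV (FAnd G H) = RV G \<union> RV H"
| "RV (FOr G H) = RV G \<inter> RV H"
| "RV (FImp G H) = {}"
| "RV (FAll x G) = {}"
| "RV (FEx x G) = {}"

text \<open>Semi-safety condition for a variable x in matrix M: every strictly positive
  occurrence of x belongs to a subformula G \<rightarrow> H with x in RV G.\<close>
fun sp_ok :: "nat \<Rightarrow> ('p, 'c) form \<Rightarrow> bool" where
  "sp_ok x FBot = True"
| "sp_ok x (FPred p ts) = (x \<notin> fv (FPred p ts))"
| "sp_ok x (FEq s t) = (x \<notin> (tvars s \<union> tvars t))"
| "sp_ok x (FAnd G H) = (sp_ok x G \<and> sp_ok x H)"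
| "sp_ok x (FOr G H) = (sp_ok x G \<and> sp_ok x H)"
| "sp_ok x (FImp G H) = (x \<in> RV G \<or> sp_ok x H)"
| "sp_ok x (FAll y G) = sp_ok x G"
| "sp_ok x (FEx y G) = sp_ok x G"

fun repl :: "nat \<Rightarrow> ('p, 'c) form \<Rightarrow> ('p, 'c) form" where
  "repl x FBot = FBot"
| "repl x (FPred p ts) = (if x \<in> RV (FPred p ts) then FBot else FPred p ts)"
| "repl x (FEq s t) = (if x \<in> RV (FEq s t :: ('p, 'c) form) then FBot else FEq s t)"
| "repl x (FAnd G H) = FAnd (repl x G) (repl x H)"
| "repl x (FOr G H) = FOr (repl x G) (repl x H)"
| "repl x (FImp G H) = FImp (repl x G) (repl x H)"
| "repl x (FAll y G) = FAll y (repl x G)"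
| "repl x (FEx y G) = FEx y (repl x G)"

text \<open>Simplification transformations, applied exhaustively (bottom-up normalisation).\<close>
definition s_and :: "('p, 'c) form \<Rightarrow> ('p, 'c) form \<Rightarrow> ('p, 'c) form" where
  "s_and G H = (if G = FBot \<or> H = FBot then FBot
                else if G = FTop then H else if H = FTop then G else FAnd G H)"

definition s_or :: "('p, 'c) form \<Rightarrow> ('p, 'c) form \<Rightarrow> ('p, 'c) form" where
  "s_or G H = (if G = FTop \<or> H = FTop then FTop
               else if G = FBot then H else if H = FBot then G else FOr G H)"

definition s_imp :: "('p, 'c) form \<Rightarrow> ('p, 'c) form \<Rightarrow> ('p, 'c) form" where
  "s_imp G H = (if G = FBot \<or> H = FTop then FTop
                else if G = FTop then H else FImp G H)"

fun simpl :: "('p, 'c) form \<Rightarrow> ('p, 'c) form" where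
  "simpl (FAnd G H) = s_and (simpl G) (simpl H)"
| "simpl (FOr G H) = s_or (simpl G) (simpl H)"
| "simpl (FImp G H) = s_imp (simpl G) (simpl H)"
| "simpl G = G"

definition pos_wr :: "nat \<Rightarrow> ('p, 'c) form \<Rightarrow> bool" where
  "pos_wr x G \<longleftrightarrow> simpl (repl x G) = FTop"

definition neg_wr :: "nat \<Rightarrow> ('p, 'c) form \<Rightarrow> bool" where
  "neg_wr x G \<longleftrightarrow> simpl (repl x G) = FBot"

text \<open>Condition (a) (q = True, universal) / (b) (q = False, existential) for a
  subformula G of polarity pol (True = positive).\<close>
definition wr_cond :: "nat \<Rightarrow> bool \<Rightarrow> bool \<Rightarrow> ('p, 'c) form \<Rightarrow> bool" where
  "wr_cond x q pol G \<longleftrightarrow>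
     (if q then (pol \<and> pos_wr x G) \<or> (\<not> pol \<and> neg_wr x G)
      else (\<not> pol \<and> pos_wr x G) \<or> (pol \<and> neg_wr x G))"

text \<open>safe_occ x q pol M: every occurrence of x in M (a subformula of polarity pol)
  belongs to a subformula of M satisfying wr_cond.\<close>
fun safe_occ :: "nat \<Rightarrow> bool \<Rightarrow> bool \<Rightarrow> ('p, 'c) form \<Rightarrow> bool" where
  "safe_occ x q pol FBot = True"
| "safe_occ x q pol (FPred p ts) = (wr_cond x q pol (FPred p ts) \<or> x \<notin> fv (FPred p ts))"
| "safe_occ x q pol (FEq s t) = (wr_cond x q pol (FEq s t :: ('p, 'c) form) \<or> x \<notin> (tvars s \<union> tvars t))"
| "safe_occ x q pol (FAnd G H) = (wr_cond x q pol (FAnd G H) \<or>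
      (safe_occ x q pol G \<and> safe_occ x q pol H))"
| "safe_occ x q pol (FOr G H) = (wr_cond x q pol (FOr G H) \<or>
      (safe_occ x q pol G \<and> safe_occ x q pol H))"
| "safe_occ x q pol (FImp G H) = (wr_cond x q pol (FImp G H) \<or>
      (safe_occ x q (\<not> pol) G \<and> safe_occ x q pol H))"
| "safe_occ x q pol (FAll y G) = False"
| "safe_occ x q pol (FEx y G) = False"

fun quant :: "(bool \<times> nat) list \<Rightarrow> ('p, 'c) form \<Rightarrow> ('p, 'c) form" where
  "quant [] M = M"
| "quant ((True, x) # qs) M = FAll x (quant qs M)"
| "quant ((False, x) # qs) M = FEx x (quant qs M)"

definition prenex_sentence :: "(bool \<times> nat) list \<Rightarrow> ('p, 'c) form \<Rightarrow> ('p, 'c) form \<Rightarrow> bool" where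
  "prenex_sentence qs M F \<longleftrightarrow> F = quant qs M \<and> qfree M \<and> distinct (map snd qs) \<and> sentence F"

definition semi_safe :: "('p, 'c) form \<Rightarrow> bool" where
  "semi_safe F \<longleftrightarrow> (\<exists>qs M. prenex_sentence qs M F \<and> (\<forall>x\<in>snd ` set qs. sp_ok x M))"

definition safe :: "('p, 'c) form \<Rightarrow> bool" where
  "safe F \<longleftrightarrow> (\<exists>qs M. prenex_sentence qs M F
      \<and> (\<forall>x\<in>snd ` set qs. sp_ok x M)
      \<and> (\<forall>(q, x)\<in>set qs. safe_occ x q True M))"

end

theory Submission
  imports Defs
begin

(* Write the safe sentence as Q1 x1 ... Qn xn M and let all constants and predicate extensions
   of the interpretation lie in U. If xi is universal, moving its value out of U preserves the
   truth of M; if it is existential, it preserves falsity. Indeed every occurrence of xi lies in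
   a subformula that is weakly restricted with the appropriate sign, and once the value of xi
   is outside U every atom restricting xi is false, so that subformula collapses to a constant
   of the right kind. Hence each quantifier may range over U instead of X, and since the
   simplification rules are sound for F* as well, the same holds for F*(u) for every u <= p:
   both conjuncts of SM[F] have the same value in I and in its extension. *)

lemma evalt_cong: "(\<And>v. v \<in> tvars t \<Longrightarrow> e v = e' v) \<Longrightarrow> evalt c e t = evalt c e' t"
  by (cases t) auto

lemma sat_cong: "(\<And>v. v \<in> fv G \<Longrightarrow> e v = e' v) \<Longrightarrow> sat V c R e G = sat V c R e' G"
proof (induction G arbitrary: e e')
  case (FPred p ts)
  then have "map (evalt c e) ts = map (evalt c e') ts"
    by (auto intro!: evalt_cong)
  then show ?case by (simp only: sat.simps)
next
  case (FEq s t)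
  then show ?case using evalt_cong[of s e e' c] evalt_cong[of t e e' c] by auto
next
  case (FAll x G)
  then have "sat V c R (e(x := a)) G = sat V c R (e'(x := a)) G" for a
    by (intro FAll.IH) auto
  then show ?case by simp
next
  case (FEx x G)
  then have "sat V c R (e(x := a)) G = sat V c R (e'(x := a)) G" for a
    by (intro FEx.IH) auto
  then show ?case by simp
next
  case (FAnd G H)
  have "sat V c R e G = sat V c R e' G" "sat V c R e H = sat V c R e' H"
    using FAnd.prems by (auto intro!: FAnd.IH)
  then show ?case by simp
next
  case (FOr G H)
  have "sat V c R e G = sat V c R e' G" "sat V c R e H = sat V c R e' H"
    using FOr.prems by (auto intro!: FOr.IH)
  then show ?case by simp
next
  case (FImp G H)
  have "sat V c R e G = sat V c R e' G" "sat V c R e H = sat V c R e' H"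
    using FImp.prems by (auto intro!: FImp.IH)
  then show ?case by simp
qed simp

lemma sat_qfree_universe: "qfree G \<Longrightarrow> sat V c R e G = sat W c R e G"
  by (induction G) auto

lemma sat_map_Inl: "sat V c R e (map_form Inl id G) = sat V c (\<lambda>p. R (Inl p)) e G"
  by (induction G arbitrary: e) (simp_all add: trm.map_id0 trm.map_ident)

lemma qfree_map_form: "qfree (map_form f g G) = qfree G"
  by (induction G) simp_all

lemma qfree_star: "qfree G \<Longrightarrow> qfree (star G)"
  by (induction G) (simp_all add: qfree_map_form)

lemma fv_map_Inl [simp]: "fv (map_form Inl id G) = fv G"
  by (induction G) (simp_all add: trm.map_id0 trm.map_ident)

lemma fv_star [simp]: "fv (star G) = fv G"
  by (induction G) simp_all

lemma preds_map_form [simp]: "preds (map_form f g G) = f ` preds G"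
  by (induction G) auto

lemma preds_star: "preds (star G) \<subseteq> Inl ` preds G \<union> Inr ` preds G"
  by (induction G) auto

lemma oconsts_map_Inl [simp]: "oconsts (map_form Inl id G) = oconsts G"
  by (induction G) (simp_all add: trm.map_id0 trm.map_ident)

lemma oconsts_star [simp]: "oconsts (star G) = oconsts G"
  by (induction G) auto

lemma preds_quant [simp]: "preds (quant qs M) = preds M"
  by (induction qs M rule: quant.induct) auto

lemma oconsts_quant [simp]: "oconsts (quant qs M) = oconsts M"
  by (induction qs M rule: quant.induct) auto

lemma star_quant: "star (quant qs M) = quant qs (star M)"
  by (induction qs M rule: quant.induct) auto

lemma sat_simpl: "sat V c R e (simpl G) = sat V c R e G"
  by (induction G rule: simpl.induct) (auto simp: s_and_def s_or_def s_imp_def FTop_def)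

lemma sat_if_simpl:
  "simpl G = FTop \<Longrightarrow> sat V c R e G"
  "simpl G = FBot \<Longrightarrow> \<not> sat V c R e G"
  by (metis sat_simpl sat.simps(1,6) FTop_def)+

lemma s_and_eq:
  "s_and G H = FTop \<longleftrightarrow> G = FTop \<and> H = FTop"
  "s_and G H = FBot \<longleftrightarrow> G = FBot \<or> H = FBot"
  by (auto simp: s_and_def FTop_def)

lemma s_or_eq:
  "s_or G H = FTop \<longleftrightarrow> G = FTop \<or> H = FTop"
  "s_or G H = FBot \<longleftrightarrow> G = FBot \<and> H = FBot"
  by (auto simp: s_or_def FTop_def)

lemma s_imp_eq:
  "s_imp G H = FTop \<longleftrightarrow> G = FBot \<or> H = FTop"
  "s_imp G H = FBot \<longleftrightarrow> G = FTop \<and> H = FBot"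
  by (auto simp: s_imp_def FTop_def)

lemma sat_star_if_simpl:
  "(simpl G = FTop \<longrightarrow> sat V c R e (star G)) \<and> (simpl G = FBot \<longrightarrow> \<not> sat V c R e (star G))"
  by (induction G)
    (auto simp: s_and_eq s_or_eq s_imp_eq sat_map_Inl sat_if_simpl, auto simp: FTop_def)

definition confined :: "'a set \<Rightarrow> ('c \<Rightarrow> 'a) \<Rightarrow> ('q \<Rightarrow> 'a list set) \<Rightarrow> ('q, 'c) form \<Rightarrow> bool"
  where "confined U c R G \<longleftrightarrow>
    (\<forall>p\<in>preds G. \<forall>xs\<in>R p. set xs \<subseteq> U) \<and> (\<forall>k\<in>oconsts G. c k \<in> U)"

lemma confined_connectives [simp]:
  "confined U c R (FAnd G H) \<longleftrightarrow> confined U c R G \<and> confined U c R H"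
  "confined U c R (FOr G H) \<longleftrightarrow> confined U c R G \<and> confined U c R H"
  "confined U c R (FImp G H) \<longleftrightarrow> confined U c R G \<and> confined U c R H"
  unfolding confined_def by (simp_all add: ball_Un conj_ac)

lemma confined_star:
  assumes "confined U c (\<lambda>p. R (Inl p)) G" "confined U c (\<lambda>p. R (Inr p)) G"
  shows "confined U c R (star G)"
  using assms preds_star[of G] unfolding confined_def by fastforce

lemma sat_repl:
  assumes "qfree G" "confined U c R G" "e x \<notin> U"
  shows "sat V c R e (repl x G) = sat V c R e G"
  using assms
proof (induction G)
  case (FPred p ts)
  show ?case
  proof (cases "x \<in> RV (FPred p ts)")
    case True
    then obtain t where t: "t \<in> set ts" "x \<in> tvars t" by auto
    have "t = Var x" using t(2) by (cases t) auto
    with t have "e x \<in> set (map (evalt c e) ts)" by force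
    moreover have "\<forall>xs\<in>R p. set xs \<subseteq> U" using FPred.prems(2) by (simp add: confined_def)
    ultimately have "map (evalt c e) ts \<notin> R p" using FPred.prems(3) by blast
    with True show ?thesis by simp
  qed simp
next
  case (FEq s t)
  then show ?case by (cases s; cases t) (auto simp: confined_def)
qed auto

lemma repl_map_Inl: "repl x (map_form Inl id G) = map_form Inl id (repl x G)"
proof (induction G)
  case (FEq s t)
  then show ?case by (cases s; cases t) simp_all
qed (simp_all add: trm.map_id0 trm.map_ident)

lemma star_repl: "star (repl x G) = repl x (star G)"
proof (induction G)
  case (FEq s t)
  then show ?case by (cases s; cases t) simp_all
qed (simp_all add: repl_map_Inl)

lemma sat_star_repl:
  assumes "qfree G" "confined U c (\<lambda>p. R (Inl p)) G" "confined U c (\<lambda>p. R (Inr p)) G"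
    and "e x \<notin> U"
  shows "sat V c R e (star (repl x G)) = sat V c R e (star G)"
  using sat_repl[OF qfree_star confined_star] assms by (simp add: star_repl)

lemma sat_if_weakly_restricted:
  assumes "qfree G" "confined U c R G" "e x \<notin> U"
  shows "pos_wr x G \<Longrightarrow> sat V c R e G" and "neg_wr x G \<Longrightarrow> \<not> sat V c R e G"
  using sat_repl[of G U c R e x V] assms sat_if_simpl[of "repl x G" V c R e]
  by (auto simp: pos_wr_def neg_wr_def)

lemma sat_star_if_weakly_restricted:
  assumes "qfree G" "confined U c (\<lambda>p. R (Inl p)) G" "confined U c (\<lambda>p. R (Inr p)) G"
    and "e x \<notin> U"
  shows "pos_wr x G \<Longrightarrow> sat V c R e (star G)" and "neg_wr x G \<Longrightarrow> \<not> sat V c R e (star G)"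
  using sat_star_repl[of G U c R e x V] assms sat_star_if_simpl[of "repl x G" V c R e]
  by (auto simp: pos_wr_def neg_wr_def)

definition value_preserved_outside :: "bool \<Rightarrow> nat \<Rightarrow> 'a set \<Rightarrow> 'a set \<Rightarrow> ('c \<Rightarrow> 'a)
    \<Rightarrow> ('q \<Rightarrow> 'a list set) \<Rightarrow> ('q, 'c) form \<Rightarrow> bool"
  where "value_preserved_outside b x U V c R N \<longleftrightarrow>
    (\<forall>e e'. (\<forall>v. v \<noteq> x \<longrightarrow> e v = e' v) \<longrightarrow> e' x \<notin> U \<longrightarrow>
       sat V c R e N = b \<longrightarrow> sat V c R e' N = b)"

lemma value_preserved_outside_fresh:
  "x \<notin> fv N \<Longrightarrow> value_preserved_outside b x U V c R N"
  unfolding value_preserved_outside_def by (metis sat_cong)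

lemma value_preserved_outside_FAnd:
  "value_preserved_outside b x U V c R G \<Longrightarrow> value_preserved_outside b x U V c R H \<Longrightarrow>
    value_preserved_outside b x U V c R (FAnd G H)"
  by (cases b) (auto simp: value_preserved_outside_def)

lemma value_preserved_outside_FOr:
  "value_preserved_outside b x U V c R G \<Longrightarrow> value_preserved_outside b x U V c R H \<Longrightarrow>
    value_preserved_outside b x U V c R (FOr G H)"
  by (cases b) (auto simp: value_preserved_outside_def)

lemma value_preserved_outside_FImp:
  "value_preserved_outside (\<not> b) x U V c R G \<Longrightarrow> value_preserved_outside b x U V c R H \<Longrightarrow>
    value_preserved_outside b x U V c R (FImp G H)"
  by (cases b) (auto simp: value_preserved_outside_def)

lemma value_preserved_outside_quantifiers:
  assumes "y \<noteq> x" "value_preserved_outside b x U V c R G"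
  shows "value_preserved_outside b x U V c R (FAll y G)"
    and "value_preserved_outside b x U V c R (FEx y G)"
proof -
  have "sat V c R (e(y := a)) G = b \<longrightarrow> sat V c R (e'(y := a)) G = b"
    if "\<forall>v. v \<noteq> x \<longrightarrow> e v = e' v" "e' x \<notin> U" for e e' a
  proof -
    have "\<forall>v. v \<noteq> x \<longrightarrow> (e(y := a)) v = (e'(y := a)) v" "(e'(y := a)) x \<notin> U"
      using that assms(1) by auto
    then show ?thesis using assms(2) unfolding value_preserved_outside_def by blast
  qed
  then show "value_preserved_outside b x U V c R (FAll y G)"
    and "value_preserved_outside b x U V c R (FEx y G)"
    unfolding value_preserved_outside_def by (cases b; auto)+
qed

lemma value_preserved_outside_quant:
  "x \<notin> snd ` set qs \<Longrightarrow> value_preserved_outside b x U V c R N \<Longrightarrow>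
    value_preserved_outside b x U V c R (quant qs N)"
  by (induction qs N rule: quant.induct) (auto intro: value_preserved_outside_quantifiers)

lemma value_preserved_outside_map_Inl:
  "value_preserved_outside b x U V c R (map_form Inl id G) \<longleftrightarrow>
    value_preserved_outside b x U V c (\<lambda>p. R (Inl p)) G"
  by (simp add: value_preserved_outside_def sat_map_Inl)

lemma value_preserved_outside_if_wr_cond:
  assumes "wr_cond x q pol G"
    and "\<And>e. pos_wr x G \<Longrightarrow> e x \<notin> U \<Longrightarrow> sat V c R e N"
    and "\<And>e. neg_wr x G \<Longrightarrow> e x \<notin> U \<Longrightarrow> \<not> sat V c R e N"
  shows "value_preserved_outside (q = pol) x U V c R N"
  using assms unfolding wr_cond_def value_preserved_outside_def by (cases q; cases pol) auto

lemma value_preserved_outside_wr_cond: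
  assumes "wr_cond x q pol G" "qfree G" "confined U c R G"
  shows "value_preserved_outside (q = pol) x U V c R G"
  using assms sat_if_weakly_restricted[of G U c R]
  by (intro value_preserved_outside_if_wr_cond) auto

lemma value_preserved_outside_star_wr_cond:
  assumes "wr_cond x q pol G" "qfree G"
    and "confined U c (\<lambda>p. R (Inl p)) G" "confined U c (\<lambda>p. R (Inr p)) G"
  shows "value_preserved_outside (q = pol) x U V c R (star G)"
  using assms sat_star_if_weakly_restricted[of G U c R]
  by (intro value_preserved_outside_if_wr_cond) auto

lemma value_preserved_outside_safe_occ:
  assumes "safe_occ x q pol G" "qfree G" "confined U c R G"
  shows "value_preserved_outside (q = pol) x U V c R G"
  using assms
proof (induction G arbitrary: pol)
  case (FImp G H)
  show ?case
  proof (cases "wr_cond x q pol (FImp G H)")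
    case True
    with FImp.prems show ?thesis by (intro value_preserved_outside_wr_cond)
  next
    case False
    with FImp.prems have "value_preserved_outside (\<not> (q = pol)) x U V c R G"
      and "value_preserved_outside (q = pol) x U V c R H"
      using FImp.IH[of "\<not> pol"] FImp.IH[of pol] by auto
    then show ?thesis by (rule value_preserved_outside_FImp)
  qed
qed (auto intro: value_preserved_outside_wr_cond value_preserved_outside_fresh
    value_preserved_outside_FAnd value_preserved_outside_FOr)

lemma value_preserved_outside_star_safe_occ:
  assumes "safe_occ x q pol G" "qfree G"
    and "confined U c (\<lambda>p. R (Inl p)) G" "confined U c (\<lambda>p. R (Inr p)) G"
  shows "value_preserved_outside (q = pol) x U V c R (star G)"
  using assms
proof (induction G arbitrary: pol)
  case (FPred p ts)
  then show ?case
    using value_preserved_outside_star_wr_cond[of x q pol "FPred p ts" U c R V]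
    by (auto intro: value_preserved_outside_fresh)
next
  case (FEq s t)
  then show ?case
    using value_preserved_outside_star_wr_cond[of x q pol "FEq s t" U c R V]
    by (auto intro: value_preserved_outside_fresh)
next
  case (FAnd G H)
  then show ?case
    using value_preserved_outside_star_wr_cond[of x q pol "FAnd G H" U c R V]
    by (auto intro: value_preserved_outside_FAnd)
next
  case (FOr G H)
  then show ?case
    using value_preserved_outside_star_wr_cond[of x q pol "FOr G H" U c R V]
    by (auto intro: value_preserved_outside_FOr)
next
  case (FImp G H)
  have unstarred: "value_preserved_outside (q = pol) x U V c R (map_form Inl id (FImp G H))"
    unfolding value_preserved_outside_map_Inl
    using FImp.prems by (intro value_preserved_outside_safe_occ) auto
  show ?case
  proof (cases "wr_cond x q pol (FImp G H)")
    case True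
    with FImp.prems show ?thesis by (intro value_preserved_outside_star_wr_cond)
  next
    case False
    with FImp.prems have "value_preserved_outside (\<not> (q = pol)) x U V c R (star G)"
      and "value_preserved_outside (q = pol) x U V c R (star H)"
      using FImp.IH[of "\<not> pol"] FImp.IH[of pol] by auto
    from value_preserved_outside_FAnd[OF value_preserved_outside_FImp[OF this] unstarred]
    show ?thesis by simp
  qed
qed (auto intro: value_preserved_outside_fresh)

lemma sat_quant_extend:
  assumes "distinct (map snd qs)" "qfree N" "U \<noteq> {}" "U \<subseteq> X"
    and "\<forall>(q, x)\<in>set qs. value_preserved_outside q x U X c R N"
    and "\<forall>v. e v \<in> U"
  shows "sat X c R e (quant qs N) = sat U c R e (quant qs N)"
  using assms(1,5,6)
proof (induction qs arbitrary: e)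
  case Nil
  then show ?case using sat_qfree_universe[OF assms(2)] by simp
next
  case (Cons bx qs)
  obtain b x where bx: "bx = (b, x)" by force
  let ?sat = "\<lambda>W a. sat W c R (e(x := a)) (quant qs N)"
  from Cons.prems bx have preserved: "value_preserved_outside b x U X c R (quant qs N)"
    by (auto intro: value_preserved_outside_quant)
  from Cons have IH: "?sat X a = ?sat U a" if "a \<in> U" for a
    using that by simp
  obtain u where "u \<in> U" using assms(3) by auto
  have "?sat X a = b" if all_U: "\<forall>a\<in>U. ?sat X a = b" and "a \<in> X" for a
  proof (cases "a \<in> U")
    case False
    have "?sat X u = b" using all_U \<open>u \<in> U\<close> by blast
    moreover have "\<forall>v. v \<noteq> x \<longrightarrow> (e(x := u)) v = (e(x := a)) v" "(e(x := a)) x \<notin> U"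
      using False by auto
    ultimately show ?thesis using preserved unfolding value_preserved_outside_def by blast
  qed (use all_U in blast)
  with IH assms(4) have "(\<forall>a\<in>X. ?sat X a = b) \<longleftrightarrow> (\<forall>a\<in>U. ?sat U a = b)"
    by auto
  with bx show ?case by (cases b) auto
qed

lemma models_quant_extend:
  assumes "distinct (map snd qs)" "qfree N" "fv (quant qs N) = {}" "U \<noteq> {}" "U \<subseteq> X"
    and "\<forall>(q, x)\<in>set qs. value_preserved_outside q x U X c R N"
  shows "models X c R (quant qs N) \<longleftrightarrow> models U c R (quant qs N)"
proof -
  obtain u where "u \<in> U" using assms(4) by auto
  have "sat W c R e (quant qs N) = sat W c R (\<lambda>_. u) (quant qs N)" for W e
    using assms(3) by (intro sat_cong) simp
  with sat_quant_extend[OF assms(1,2,4,5,6), of "\<lambda>_. u"] \<open>u \<in> U\<close> assms(5) show ?thesis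
    unfolding models_def by auto
qed

lemma stable_model_extend_iff:
  assumes "U \<subseteq> X" "\<forall>p\<in>preds F. P p \<subseteq> tuples ar p U"
    and "models X c P F \<longleftrightarrow> models U c P F"
    and "\<And>Q. \<forall>p\<in>preds F. Q p \<subseteq> P p \<Longrightarrow>
      models X c (\<lambda>r. case r of Inl p \<Rightarrow> P p | Inr p \<Rightarrow> Q p) (star F) \<longleftrightarrow>
      models U c (\<lambda>r. case r of Inl p \<Rightarrow> P p | Inr p \<Rightarrow> Q p) (star F)"
  shows "stable_model ar F X c P \<longleftrightarrow> stable_model ar F U c P"
proof -
  let ?R = "\<lambda>Q r. case r of Inl p \<Rightarrow> P p | Inr p \<Rightarrow> Q p"
  have tuples_mono: "tuples ar p U \<subseteq> tuples ar p X" for p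
    using assms(1) unfolding tuples_def by auto
  have "(\<forall>p\<in>preds F. Q p \<subseteq> tuples ar p X) \<and> (\<forall>p\<in>preds F. Q p \<subseteq> P p)
          \<and> \<not> (\<forall>p\<in>preds F. Q p = P p) \<and> models X c (?R Q) (star F) \<longleftrightarrow>
        (\<forall>p\<in>preds F. Q p \<subseteq> tuples ar p U) \<and> (\<forall>p\<in>preds F. Q p \<subseteq> P p)
          \<and> \<not> (\<forall>p\<in>preds F. Q p = P p) \<and> models U c (?R Q) (star F)" for Q
  proof (cases "\<forall>p\<in>preds F. Q p \<subseteq> P p")
    case True
    with assms(2) tuples_mono have "\<forall>p\<in>preds F. Q p \<subseteq> tuples ar p U"
      "\<forall>p\<in>preds F. Q p \<subseteq> tuples ar p X" by blast+
    with True assms(4)[of Q] show ?thesis by simp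
  qed blast
  then show ?thesis
    unfolding stable_model_def assms(3) by (simp only:)
qed

theorem proposition5:
  fixes F :: "('p, 'c) form" and ar :: "'p \<Rightarrow> nat"
    and U X :: "'a set" and c :: "'c \<Rightarrow> 'a" and P :: "'p \<Rightarrow> 'a list set"
  assumes "safe F"
    and "wf_form ar F"
    and "wf_interp ar F U c P"
    and "U \<subseteq> X"
  shows "stable_model ar F X c P \<longleftrightarrow> stable_model ar F U c P"
proof -
  obtain qs M where "prenex_sentence qs M F" and safe: "\<forall>(q, x)\<in>set qs. safe_occ x q True M"
    using assms(1) unfolding safe_def by blast
  then have F: "F = quant qs M" and M: "qfree M" "distinct (map snd qs)" "fv (quant qs M) = {}"
    unfolding prenex_sentence_def sentence_def by auto
  have U: "U \<noteq> {}" "\<forall>p\<in>preds F. P p \<subseteq> tuples ar p U" and "confined U c P M"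
    using assms(3) F unfolding wf_interp_def confined_def tuples_def by auto
  show ?thesis
  proof (rule stable_model_extend_iff[OF assms(4) U(2)])
    have "value_preserved_outside q x U X c P M" if "(q, x) \<in> set qs" for q x
      using value_preserved_outside_safe_occ[of x q True M U c P X] safe that M
        \<open>confined U c P M\<close> by auto
    with M U(1) assms(4) show "models X c P F \<longleftrightarrow> models U c P F"
      unfolding F by (intro models_quant_extend) auto
  next
    fix Q assume "\<forall>p\<in>preds F. Q p \<subseteq> P p"
    with \<open>confined U c P M\<close> F have "confined U c Q M"
      unfolding confined_def by fastforce
    let ?R = "\<lambda>r. case r of Inl p \<Rightarrow> P p | Inr p \<Rightarrow> Q p"
    have "value_preserved_outside q x U X c ?R (star M)" if "(q, x) \<in> set qs" for q x
      using value_preserved_outside_star_safe_occ[of x q True M U c ?R X] safe that M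
        \<open>confined U c P M\<close> \<open>confined U c Q M\<close> by auto
    with M U(1) assms(4) show "models X c ?R (star F) \<longleftrightarrow> models U c ?R (star F)"
      unfolding F star_quant
      by (intro models_quant_extend) (auto simp: qfree_star star_quant[symmetric])
  qed
qed

end
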